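(* Let $A(n) = \sum_{k=0}^{n} \binom{n}{k}^2 \binom{n+k}{k}^2$ for integers $n \geq 0$ (the Apéry numbers). Then for every $n \geq 0$, $A(n)$ equals the coefficient of $x_1^n x_2^n x_3^n x_4^n$ in the Taylor expansion at the origin of the rational function $$\frac{1}{(1 - x_1 - x_2)(1 - x_3 - x_4) - x_1 x_2 x_3 x_4}.$$ *)

theory Defs
  imports Main
begin

text \<open>Formal power series in four variables x1,x2,x3,x4 with integer coefficients,
  represented by their coefficient function on exponent vectors (a,b,c,d).\<close>

type_synonym mps4 = "nat \<times> nat \<times> nat \<times> nat \<Rightarrow> int"

definition mps4_one :: mps4 where
  "mps4_one = (\<lambda>e. if e = (0,0,0,0) then 1 else 0)"

definition mps4_add :: "mps4 \<Rightarrow> mps4 \<Rightarrow> mps4" where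
  "mps4_add f g = (\<lambda>e. f e + g e)"

definition mps4_sub :: "mps4 \<Rightarrow> mps4 \<Rightarrow> mps4" where
  "mps4_sub f g = (\<lambda>e. f e - g e)"

definition mps4_mult :: "mps4 \<Rightarrow> mps4 \<Rightarrow> mps4" where
  "mps4_mult f g = (\<lambda>(a,b,c,d).
     \<Sum>i\<le>a. \<Sum>j\<le>b. \<Sum>k\<le>c. \<Sum>l\<le>d. f (i,j,k,l) * g (a-i, b-j, c-k, d-l))"

definition mps4_X1 :: mps4 where "mps4_X1 = (\<lambda>e. if e = (1,0,0,0) then 1 else 0)"
definition mps4_X2 :: mps4 where "mps4_X2 = (\<lambda>e. if e = (0,1,0,0) then 1 else 0)"
definition mps4_X3 :: mps4 where "mps4_X3 = (\<lambda>e. if e = (0,0,1,0) then 1 else 0)"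
definition mps4_X4 :: mps4 where "mps4_X4 = (\<lambda>e. if e = (0,0,0,1) then 1 else 0)"

definition apery_denom :: mps4 where
  "apery_denom =
     mps4_sub
       (mps4_mult (mps4_sub (mps4_sub mps4_one mps4_X1) mps4_X2)
                  (mps4_sub (mps4_sub mps4_one mps4_X3) mps4_X4))
       (mps4_mult (mps4_mult mps4_X1 mps4_X2) (mps4_mult mps4_X3 mps4_X4))"

definition apery :: "nat \<Rightarrow> nat" where
  "apery n = (\<Sum>k\<le>n. (n choose k)^2 * ((n + k) choose k)^2)"

end

theory Submission
  imports Defs
begin

text \<open>Expanding the denominator D = (1 - x1 - x2)(1 - x3 - x4) - x1 x2 x3 x4 as a geometric series,
  1/D = \<Sum>m. (x1 x2)^m/(1 - x1 - x2)^(m+1) \<cdot> (x3 x4)^m/(1 - x3 - x4)^(m+1).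
  The coefficient of x^a y^b in (x y)^m/(1 - x - y)^(m+1) is the trinomial coefficient
  (a+b-m)!/((a-m)! (b-m)! m!), so the coefficient of (x1 x2 x3 x4)^n is
  \<Sum>m\<le>n. ((2n-m)!/((n-m)!^2 m!))^2 = \<Sum>k\<le>n. (n choose k)^2 ((n+k) choose k)^2 with k = n - m.
  Writing Q_m for that series, D \<cdot> F = 1 holds coefficientwise because
  (1 - x - y) Q_(m+1) = x y Q_m (Pascal's rule for trinomial coefficients) makes the sum over m telescope.
  Uniqueness holds because D has constant term 1.\<close>

text \<open>(p+q+m)!/(p! q! m!), extended by 0 to negative arguments.\<close>
definition trinomial :: "int \<Rightarrow> int \<Rightarrow> int \<Rightarrow> int" where
  "trinomial p q m = (if p < 0 \<or> q < 0 \<or> m < 0 then 0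
     else int ((nat (p+q+m) choose nat p) * (nat (q+m) choose nat m)))"

lemma trinomial_of_nat:
  "trinomial (int p) (int q) (int m) = int ((p+q+m choose p) * (q+m choose m))"
  unfolding trinomial_def by (simp add: of_nat_add[symmetric] del: of_nat_add)

lemma trinomial_neg: "p < 0 \<or> q < 0 \<or> m < 0 \<Longrightarrow> trinomial p q m = 0"
  unfolding trinomial_def by simp

lemma trinomial_000: "trinomial 0 0 0 = 1"
  unfolding trinomial_def by simp

lemma int_Suc_minus_1: "int (Suc n) - 1 = int n"
  by simp

lemma trinomial_pascal_nat:
  assumes "\<not> (p = 0 \<and> q = 0 \<and> m = 0)"
  shows "trinomial (int p) (int q) (int m) = trinomial (int p - 1) (int q) (int m)
           + trinomial (int p) (int q - 1) (int m) + trinomial (int p) (int q) (int m - 1)"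
  using assms
proof (cases p; cases q; cases m)
  fix p' q' m' assume pqm: "p = Suc p'" "q = Suc q'" "m = Suc m'"
  have sums: "Suc p' + Suc q' + Suc m' = Suc (p'+q'+m'+2)" "Suc q' + Suc m' = Suc (q'+m'+1)"
    "p' + Suc q' + Suc m' = p'+q'+m'+2" "Suc p' + q' + Suc m' = p'+q'+m'+2"
    "Suc p' + Suc q' + m' = p'+q'+m'+2" "q' + Suc m' = q'+m'+1" "Suc q' + m' = q'+m'+1"
    by simp_all
  show ?thesis
    unfolding pqm int_Suc_minus_1 trinomial_of_nat sums binomial_Suc_Suc
    by (simp only: of_nat_add[symmetric] of_nat_eq_iff algebra_simps)
qed (simp_all add: int_Suc_minus_1 trinomial_def nat_add_distrib del: of_nat_Suc)

lemma trinomial_pascal: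
  assumes "p \<ge> 0" "q \<ge> 0" "m \<ge> 0" "\<not> (p = 0 \<and> q = 0 \<and> m = 0)"
  shows "trinomial p q m = trinomial (p-1) q m + trinomial p (q-1) m + trinomial p q (m-1)"
proof -
  obtain P Q M where "p = int P" "q = int Q" "m = int M"
    using assms by (metis nonneg_int_cases)
  then show ?thesis using trinomial_pascal_nat[of P Q M] assms by simp
qed

text \<open>The coefficient of x^a y^b in (x y)^m/(1 - x - y)^(m+1); a, b range over int so that
  the shifts a - 1, b - 1 need no case distinction.\<close>
definition geom_coeff :: "nat \<Rightarrow> int \<Rightarrow> int \<Rightarrow> int" where
  "geom_coeff m a b = trinomial (a - int m) (b - int m) (int m)"

lemma geom_coeff_Suc:
  "geom_coeff (Suc m) a b - geom_coeff (Suc m) (a-1) b - geom_coeff (Suc m) a (b-1)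
     = geom_coeff m (a-1) (b-1)"
proof (cases "a - int (Suc m) < 0 \<or> b - int (Suc m) < 0")
  case True
  then show ?thesis unfolding geom_coeff_def by (auto simp: trinomial_neg)
next
  case False
  then show ?thesis unfolding geom_coeff_def
    using trinomial_pascal[of "a - int (Suc m)" "b - int (Suc m)" "int (Suc m)"]
    by (simp add: algebra_simps)
qed

lemma geom_coeff_0:
  "geom_coeff 0 a b - geom_coeff 0 (a-1) b - geom_coeff 0 a (b-1) = (if a = 0 \<and> b = 0 then 1 else 0)"
proof (cases "a < 0 \<or> b < 0")
  case True
  then show ?thesis unfolding geom_coeff_def by (auto simp: trinomial_neg)
next
  case False
  then show ?thesis unfolding geom_coeff_def
    using trinomial_pascal[of a b 0] by (auto simp: trinomial_neg trinomial_000)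
qed

lemma geom_coeff_eq_0: "a < int m \<or> b < int m \<Longrightarrow> geom_coeff m a b = 0"
  unfolding geom_coeff_def by (auto simp: trinomial_neg)

lemma geom_coeff_diag:
  "m \<le> n \<Longrightarrow> geom_coeff m (int n) (int n) = int (((n + (n - m)) choose (n - m)) * (n choose m))"
  unfolding geom_coeff_def
  by (simp add: of_nat_diff[symmetric] trinomial_of_nat del: of_nat_diff)

definition apery_coeff :: "int \<Rightarrow> int \<Rightarrow> int \<Rightarrow> int \<Rightarrow> int" where
  "apery_coeff a b c d = (\<Sum>m\<le>nat a. geom_coeff m a b * geom_coeff m c d)"

lemma apery_coeff_sum_atMost:
  "nat a \<le> K \<Longrightarrow> apery_coeff a b c d = (\<Sum>m\<le>K. geom_coeff m a b * geom_coeff m c d)"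
  unfolding apery_coeff_def by (rule sum.mono_neutral_left) (auto intro!: geom_coeff_eq_0)

lemma apery_coeff_neg: "a < 0 \<or> b < 0 \<or> c < 0 \<or> d < 0 \<Longrightarrow> apery_coeff a b c d = 0"
  unfolding apery_coeff_def by (auto intro!: sum.neutral simp: geom_coeff_eq_0)

lemma apery_coeff_recurrence:
  "apery_coeff a b c d - apery_coeff (a-1) b c d - apery_coeff a (b-1) c d
   - apery_coeff a b (c-1) d - apery_coeff a b c (d-1)
   + apery_coeff (a-1) b (c-1) d + apery_coeff (a-1) b c (d-1)
   + apery_coeff a (b-1) (c-1) d + apery_coeff a (b-1) c (d-1)
   - apery_coeff (a-1) (b-1) (c-1) (d-1) = (if a = 0 \<and> b = 0 \<and> c = 0 \<and> d = 0 then 1 else 0)"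
proof -
  define K where "K = Suc (nat a)"
  define A where "A m = geom_coeff m a b - geom_coeff m (a-1) b - geom_coeff m a (b-1)" for m
  define C where "C m = geom_coeff m c d - geom_coeff m (c-1) d - geom_coeff m c (d-1)" for m
  have K: "nat a \<le> K" "nat (a-1) \<le> K" unfolding K_def by auto
  have "(\<Sum>m\<le>K. A m * C m) = A 0 * C 0 + (\<Sum>m\<le>nat a. A (Suc m) * C (Suc m))"
    unfolding K_def by (rule sum.atMost_Suc_shift)
  also have "\<dots> = (if a = 0 \<and> b = 0 \<and> c = 0 \<and> d = 0 then 1 else 0)
                   + apery_coeff (a-1) (b-1) (c-1) (d-1)"
    using apery_coeff_sum_atMost[of "a-1" "nat a"]
    unfolding A_def C_def by (simp add: geom_coeff_0 geom_coeff_Suc)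
  finally have telescoped: "(\<Sum>m\<le>K. A m * C m) = (if a = 0 \<and> b = 0 \<and> c = 0 \<and> d = 0 then 1 else 0)
                   + apery_coeff (a-1) (b-1) (c-1) (d-1)" .
  have "(\<Sum>m\<le>K. A m * C m) =
      (\<Sum>m\<le>K. geom_coeff m a b * geom_coeff m c d) - (\<Sum>m\<le>K. geom_coeff m (a-1) b * geom_coeff m c d)
    - (\<Sum>m\<le>K. geom_coeff m a (b-1) * geom_coeff m c d) - (\<Sum>m\<le>K. geom_coeff m a b * geom_coeff m (c-1) d)
    - (\<Sum>m\<le>K. geom_coeff m a b * geom_coeff m c (d-1))
    + (\<Sum>m\<le>K. geom_coeff m (a-1) b * geom_coeff m (c-1) d)
    + (\<Sum>m\<le>K. geom_coeff m (a-1) b * geom_coeff m c (d-1))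
    + (\<Sum>m\<le>K. geom_coeff m a (b-1) * geom_coeff m (c-1) d)
    + (\<Sum>m\<le>K. geom_coeff m a (b-1) * geom_coeff m c (d-1))"
    unfolding A_def C_def by (simp add: sum.distrib sum_subtractf algebra_simps)
  also have "\<dots> = apery_coeff a b c d - apery_coeff (a-1) b c d - apery_coeff a (b-1) c d
      - apery_coeff a b (c-1) d - apery_coeff a b c (d-1)
      + apery_coeff (a-1) b (c-1) d + apery_coeff (a-1) b c (d-1)
      + apery_coeff a (b-1) (c-1) d + apery_coeff a (b-1) c (d-1)"
    using K by (simp add: apery_coeff_sum_atMost)
  finally show ?thesis using telescoped by simp
qed

lemma apery_coeff_diag: "apery_coeff (int n) (int n) (int n) (int n) = int (apery n)"
proof -
  have "apery_coeff (int n) (int n) (int n) (int n)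
      = (\<Sum>m\<in>{0..n}. int ((((n + (n - m)) choose (n - m)) * (n choose m))^2))"
    unfolding apery_coeff_def
    by (rule sum.cong) (auto simp: geom_coeff_diag power2_eq_square atLeast0AtMost)
  also have "\<dots> = (\<Sum>k\<in>{0..n}. int ((((n + (n - (n - k))) choose (n - (n - k))) * (n choose (n - k)))^2))"
    by (subst sum.atLeastAtMost_rev) simp
  also have "\<dots> = (\<Sum>k\<le>n. int ((n choose k)^2 * ((n + k) choose k)^2))"
    by (rule sum.cong) (auto simp: atLeast0AtMost binomial_symmetric[symmetric] power_mult_distrib)
  finally show ?thesis by (simp add: apery_def)
qed

lemma sum_if_const: "(\<Sum>x\<in>A. if P then f x else 0) = (if P then (\<Sum>x\<in>A. f x) else 0)"
  by simp

definition mps4_monom :: "nat \<times> nat \<times> nat \<times> nat \<Rightarrow> mps4" where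
  "mps4_monom p = (\<lambda>e. if e = p then 1 else 0)"

definition mps4_shift :: "mps4 \<Rightarrow> nat \<times> nat \<times> nat \<times> nat \<Rightarrow> mps4" where
  "mps4_shift H p e = (case p of (i,j,k,l) \<Rightarrow> case e of (a,b,c,d) \<Rightarrow>
     (if i \<le> a \<and> j \<le> b \<and> k \<le> c \<and> l \<le> d then H (a-i, b-j, c-k, d-l) else 0))"

lemma mps4_mult_monom: "mps4_mult (mps4_monom (i,j,k,l)) H = mps4_shift H (i,j,k,l)"
proof (rule ext, clarify)
  fix a b c d
  have "\<And>x y z w h. (if (x,y,z,w) = (i,j,k,l) then 1 else 0) * h =
     (if w = l then if z = k then if y = j then if x = i then h else 0 else 0 else 0 else (0::int))"
    by auto
  then show "mps4_mult (mps4_monom (i,j,k,l)) H (a,b,c,d) = mps4_shift H (i,j,k,l) (a,b,c,d)"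
    unfolding mps4_mult_def mps4_monom_def mps4_shift_def
    by (simp only:) (simp add: sum.delta sum_if_const)
qed

lemma mps4_shift_monom:
  "mps4_shift (mps4_monom (i',j',k',l')) (i,j,k,l) = mps4_monom (i+i', j+j', k+k', l+l')"
  unfolding mps4_shift_def mps4_monom_def by (rule ext) (auto split: if_splits)

lemma mps4_shift_0: "mps4_shift H (0,0,0,0) = H"
  unfolding mps4_shift_def by (rule ext) auto

lemma mps4_mult_sub_left: "mps4_mult (mps4_sub f g) h = mps4_sub (mps4_mult f h) (mps4_mult g h)"
  unfolding mps4_mult_def mps4_sub_def
  by (rule ext) (auto simp: sum_subtractf left_diff_distrib)

lemma mps4_mult_sub_right: "mps4_mult h (mps4_sub f g) = mps4_sub (mps4_mult h f) (mps4_mult h g)"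
  unfolding mps4_mult_def mps4_sub_def
  by (rule ext) (auto simp: sum_subtractf right_diff_distrib)

lemma mps4_monom_simps:
  "mps4_one = mps4_monom (0,0,0,0)" "mps4_X1 = mps4_monom (1,0,0,0)"
  "mps4_X2 = mps4_monom (0,1,0,0)" "mps4_X3 = mps4_monom (0,0,1,0)"
  "mps4_X4 = mps4_monom (0,0,0,1)"
  unfolding mps4_one_def mps4_X1_def mps4_X2_def mps4_X3_def mps4_X4_def mps4_monom_def
  by auto

lemma mps4_mult_coeff_lowest:
  assumes "\<And>i j k l. i+j+k+l < a+b+c+d \<Longrightarrow> H (i,j,k,l) = 0"
  shows "mps4_mult D H (a,b,c,d) = D (0,0,0,0) * H (a,b,c,d)"
proof -
  have "D (i,j,k,l) * H (a-i, b-j, c-k, d-l) =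
      (if l = 0 then if k = 0 then if j = 0 then if i = 0 then D (0,0,0,0) * H (a,b,c,d)
       else 0 else 0 else 0 else 0)"
    if "i \<le> a" "j \<le> b" "k \<le> c" "l \<le> d" for i j k l
    using that assms[of "a-i" "b-j" "c-k" "d-l"] by auto
  then show ?thesis
    unfolding mps4_mult_def by (simp cong: sum.cong) (simp add: sum.delta sum_if_const)
qed

lemma mps4_mult_cancel_left:
  assumes "D (0,0,0,0) = 1" and "mps4_mult D G = mps4_mult D F"
  shows "G = F"
proof -
  define H where "H = mps4_sub G F"
  have "mps4_mult D H = mps4_sub (mps4_mult D G) (mps4_mult D F)"
    unfolding H_def by (rule mps4_mult_sub_right)
  then have DH: "mps4_mult D H e = 0" for e
    using assms(2) by (simp add: mps4_sub_def)
  have "H (a,b,c,d) = 0" for a b c d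
  proof (induction "a+b+c+d" arbitrary: a b c d rule: less_induct)
    case less
    then have "mps4_mult D H (a,b,c,d) = H (a,b,c,d)"
      using mps4_mult_coeff_lowest[of a b c d H D] assms(1) by simp
    with DH show ?case by simp
  qed
  then have "H e = 0" for e by (cases e) auto
  then show ?thesis unfolding H_def mps4_sub_def by (intro ext) simp
qed

lemma apery_denom_mult:
  "mps4_mult apery_denom H e = H e - mps4_shift H (1,0,0,0) e - mps4_shift H (0,1,0,0) e
     - mps4_shift H (0,0,1,0) e - mps4_shift H (0,0,0,1) e
     + mps4_shift H (1,0,1,0) e + mps4_shift H (1,0,0,1) e
     + mps4_shift H (0,1,1,0) e + mps4_shift H (0,1,0,1) e - mps4_shift H (1,1,1,1) e"
  unfolding apery_denom_def mps4_monom_simps mps4_mult_sub_left mps4_mult_sub_right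
    mps4_mult_monom mps4_shift_monom
  by (simp add: mps4_shift_0 mps4_sub_def)

definition apery_series :: mps4 where
  "apery_series = (\<lambda>(a,b,c,d). apery_coeff (int a) (int b) (int c) (int d))"

lemma mps4_shift_apery_series:
  "mps4_shift apery_series (i,j,k,l) (a,b,c,d)
     = apery_coeff (int a - int i) (int b - int j) (int c - int k) (int d - int l)"
  unfolding mps4_shift_def apery_series_def by (auto simp: of_nat_diff apery_coeff_neg)

lemma apery_denom_mult_apery_series: "mps4_mult apery_denom apery_series = mps4_one"
proof (rule ext, clarify)
  fix a b c d
  show "mps4_mult apery_denom apery_series (a,b,c,d) = mps4_one (a,b,c,d)"
    unfolding apery_denom_mult mps4_shift_apery_series
    using apery_coeff_recurrence[of "int a" "int b" "int c" "int d"]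
    by (simp add: apery_series_def mps4_one_def)
qed

lemma apery_denom_0: "apery_denom (0,0,0,0) = 1"
  using apery_denom_mult[of mps4_one "(0,0,0,0)"]
  by (simp add: mps4_mult_def mps4_one_def mps4_shift_def)

theorem theorem1p1:
  shows "\<exists>F. mps4_mult apery_denom F = mps4_one
            \<and> (\<forall>G. mps4_mult apery_denom G = mps4_one \<longrightarrow> G = F)
            \<and> (\<forall>n. F (n, n, n, n) = int (apery n))"
proof (intro exI conjI allI impI)
  show "mps4_mult apery_denom apery_series = mps4_one"
    by (rule apery_denom_mult_apery_series)
  show "G = apery_series" if "mps4_mult apery_denom G = mps4_one" for G
    using mps4_mult_cancel_left[of apery_denom, OF apery_denom_0] that apery_denom_mult_apery_series by simp
  show "apery_series (n, n, n, n) = int (apery n)" for n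
    using apery_coeff_diag by (simp add: apery_series_def)
qed

end
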